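(* Let $p,q$ be positive integers with $1<q<p-q$ and $\gcd(p,q)=1$, let $A=\langle q,p-q\rangle\subseteq\mathbb{Z}^+$, let $s\in A\setminus\{0\}$, and let $r$ be a positive integer with $1<r<s-r$ and $\gcd(r,s)=1$; put $B=\langle r,s-r\rangle$. Let $M$ be the submonoid of $\mathbb{Q}^+$ generated by all fractions $k/r$ with $k\in A$ and all fractions $\frac{k'}{r}\left(\frac{s}{r}\right)^n$ with $k'\in B$ and $n\ge 1$, and let $G=M+(-M)$ with positive cone $G^+=M$. For $n\ge1$ let $e_n=(s/r)^n$. Then the set $D=\{x\in G^+ : x\le_G e_n \text{ for some } n\}$ is an interval in $G^+$, $D\neq G^+$, and $rD=G^+$.
   Context: $\langle a_1,\dots,a_k\rangle$ denotes the submonoid of $\mathbb{Z}^+$ generated by $a_1,\dots,a_k$. For a partially ordered abelian group $(G,G^+)$, $x\le_G y$ means $y-x\in G^+$. An interval in $G^+$ is a nonempty subset $X\subseteq G^+$ which is upward directed (any two elements have a common upper bound in $X$) and order-hereditary ($0\le y\le x\in X$ implies $y\in X$). The sum of intervals is $X+Y=\{z\in G^+: z\le x+y\text{ for some }x\in X,y\in Y\}$, and for a positive integer $t$, $tX$ denotes the $t$-fold sum $X+\cdots+X$. *)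

theory Defs
  imports Complex_Main
begin

inductive_set gen_monoid :: "'a::comm_monoid_add set \<Rightarrow> 'a set" for S where
  zero: "0 \<in> gen_monoid S"
| gen: "x \<in> S \<Longrightarrow> x \<in> gen_monoid S"
| add: "x \<in> gen_monoid S \<Longrightarrow> y \<in> gen_monoid S \<Longrightarrow> x + y \<in> gen_monoid S"

definition le_G :: "rat set \<Rightarrow> rat \<Rightarrow> rat \<Rightarrow> bool" where
  "le_G P x y \<longleftrightarrow> y - x \<in> P"

definition is_interval :: "rat set \<Rightarrow> rat set \<Rightarrow> bool" where
  "is_interval P X \<longleftrightarrow> X \<noteq> {} \<and> X \<subseteq> P
     \<and> (\<forall>x\<in>X. \<forall>y\<in>X. \<exists>z\<in>X. le_G P x z \<and> le_G P y z)
     \<and> (\<forall>x\<in>X. \<forall>y. le_G P 0 y \<and> le_G P y x \<longrightarrow> y \<in> X)"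

definition isum :: "rat set \<Rightarrow> rat set \<Rightarrow> rat set \<Rightarrow> rat set" where
  "isum P X Y = {z \<in> P. \<exists>x\<in>X. \<exists>y\<in>Y. le_G P z (x + y)}"

(* t-fold sum t X = X + ... + X (meaningful for t >= 1) *)
fun imul :: "rat set \<Rightarrow> nat \<Rightarrow> rat set \<Rightarrow> rat set" where
  "imul P 0 X = {0}"
| "imul P (Suc 0) X = X"
| "imul P (Suc (Suc n)) X = isum P X (imul P (Suc n) X)"

end

theory Submission
  imports Defs
begin

text \<open>
  The powers e_n = (s/r)^n increase in the order of G, as e_(n+1) - e_n = ((s - r)/r) e_n,
  so D is an interval. Even 2 r e_n <= r e_(n+1), so the elements of G^+ below some r e_n
  are closed under addition; they include all generators, hence rD = G^+.

  For D \<noteq> G^+ one shows 2s/r \<notin> D. Every element of G^+ can be written as T / r^(K+1)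
  with T = r^K a + \<Sum>_k b_k s^k r^(K-k), where a \<in> A and the digits b_k lie in B.
  Since r and s are coprime, powers of r dividing such a numerator can be cancelled without
  leaving this form. If e_n - c/r had such a form, comparison with s^n would force every
  digit b_k to be s - r, and then c <= s.
\<close>

lemma gen_monoid_least:
  assumes "0 \<in> S" "\<And>x y. x \<in> S \<Longrightarrow> y \<in> S \<Longrightarrow> x + y \<in> S" "G \<subseteq> S"
  shows "gen_monoid G \<subseteq> S"
proof
  fix x assume "x \<in> gen_monoid G"
  then show "x \<in> S" by induction (use assms in auto)
qed

lemma gen_monoid_of_nat_mult:
  fixes x :: "'a::comm_semiring_1"
  shows "x \<in> gen_monoid G \<Longrightarrow> of_nat c * x \<in> gen_monoid G"
  by (induction c) (auto simp: algebra_simps intro: gen_monoid.intros)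

lemma gen_monoid_pair_elem:
  fixes x a b :: nat
  assumes "x \<in> gen_monoid {a, b}"
  shows "\<exists>i j. x = i * a + j * b"
  using assms
proof induction
  case zero
  then show ?case by auto
next
  case (gen x)
  then show ?case by (auto intro: exI[of _ 0] exI[of _ 1])
next
  case (add x y)
  then obtain i j i' j' where "x = i * a + j * b" "y = i' * a + j' * b" by blast
  then show ?case by (intro exI[of _ "i + i'"] exI[of _ "j + j'"]) (simp add: algebra_simps)
qed

lemma dvd_if_gen_monoid_pair_less:
  fixes x a b :: nat
  assumes "x \<in> gen_monoid {a, b}" "x < b"
  shows "a dvd x"
proof -
  obtain i j where x: "x = i * a + j * b" using gen_monoid_pair_elem[OF assms(1)] by blast
  with assms(2) have "j = 0" by (cases j) auto
  with x show ?thesis by simp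
qed

locale positive_cone =
  fixes P :: "rat set"
  assumes zero_mem: "0 \<in> P" and add_mem: "x \<in> P \<Longrightarrow> y \<in> P \<Longrightarrow> x + y \<in> P"
begin

lemma of_nat_mult_mem: "x \<in> P \<Longrightarrow> of_nat c * x \<in> P"
  by (induction c) (auto simp: algebra_simps intro: zero_mem add_mem)

lemma le_G_refl: "le_G P x x"
  by (simp add: le_G_def zero_mem)

lemma le_G_trans: "le_G P x y \<Longrightarrow> le_G P y z \<Longrightarrow> le_G P x z"
  unfolding le_G_def using add_mem[of "z - y" "y - x"] by simp

lemma le_G_add_mono: "le_G P x x' \<Longrightarrow> le_G P y y' \<Longrightarrow> le_G P (x + y) (x' + y')"
  unfolding le_G_def using add_mem[of "x' - x" "y' - y"] by (simp add: algebra_simps)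

lemma le_G_of_nat_mult_mono: "le_G P x y \<Longrightarrow> le_G P (of_nat c * x) (of_nat c * y)"
  unfolding le_G_def using of_nat_mult_mem[of "y - x" c] by (simp add: algebra_simps)

context
  fixes u :: "nat \<Rightarrow> rat"
  assumes mem: "\<And>n. u n \<in> P" and inc: "\<And>n. le_G P (u n) (u (Suc n))"
begin

lemma le_G_incseq: "m \<le> n \<Longrightarrow> le_G P (u m) (u n)"
  by (induction n rule: dec_induct) (auto intro: le_G_refl le_G_trans inc)

lemma le_G_incseq_of_nat_mult: "m \<le> n \<Longrightarrow> le_G P (of_nat t * u m) (of_nat t * u n)"
  by (rule le_G_of_nat_mult_mono) (rule le_G_incseq)

lemma is_interval_below_incseq: "is_interval P {x \<in> P. \<exists>n. le_G P x (u n)}"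
  unfolding is_interval_def
proof (intro conjI ballI allI impI)
  have "le_G P 0 (u 0)" using mem by (simp add: le_G_def)
  then show "{x \<in> P. \<exists>n. le_G P x (u n)} \<noteq> {}" using zero_mem by blast
  show "{x \<in> P. \<exists>n. le_G P x (u n)} \<subseteq> P" by blast
next
  fix x y assume "x \<in> {x \<in> P. \<exists>n. le_G P x (u n)}" "y \<in> {x \<in> P. \<exists>n. le_G P x (u n)}"
  then obtain m n where "le_G P x (u m)" "le_G P y (u n)" by blast
  then have "le_G P x (u (max m n))" "le_G P y (u (max m n))"
    using le_G_trans le_G_incseq by (meson max.cobounded1 max.cobounded2)+
  moreover have "u (max m n) \<in> {x \<in> P. \<exists>n. le_G P x (u n)}" using mem le_G_refl by blast
  ultimately show "\<exists>z \<in> {x \<in> P. \<exists>n. le_G P x (u n)}. le_G P x z \<and> le_G P y z" by blast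
next
  fix x y assume "x \<in> {x \<in> P. \<exists>n. le_G P x (u n)}" "le_G P 0 y \<and> le_G P y x"
  then show "y \<in> {x \<in> P. \<exists>n. le_G P x (u n)}" using le_G_trans by (auto simp: le_G_def)
qed

lemma imul_below_incseq:
  "1 \<le> t \<Longrightarrow> imul P t {x \<in> P. \<exists>n. le_G P x (u n)} = {z \<in> P. \<exists>n. le_G P z (of_nat t * u n)}"
proof (induction t rule: nat_induct_at_least)
  case base
  then show ?case by simp
next
  case (Suc t)
  define X where "X = {x \<in> P. \<exists>n. le_G P x (u n)}"
  have step: "imul P (Suc t) X = isum P X (imul P t X)" using Suc.hyps by (cases t) auto
  have "imul P (Suc t) X = {z \<in> P. \<exists>n. le_G P z (of_nat (Suc t) * u n)}"
  proof (intro set_eqI iffI)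
    fix z assume "z \<in> imul P (Suc t) X"
    then obtain x y where z: "z \<in> P" "x \<in> X" "y \<in> imul P t X" "le_G P z (x + y)"
      using step unfolding isum_def by blast
    obtain m n where "le_G P x (u m)" "le_G P y (of_nat t * u n)"
      using z(2,3) Suc.IH X_def by blast
    then have "le_G P (x + y) (u (max m n) + of_nat t * u (max m n))"
      by (intro le_G_add_mono) (meson le_G_trans le_G_incseq le_G_incseq_of_nat_mult max.cobounded1 max.cobounded2)+
    then have "le_G P z (of_nat (Suc t) * u (max m n))"
      using le_G_trans[OF z(4)] by (simp add: algebra_simps)
    with z(1) show "z \<in> {z \<in> P. \<exists>n. le_G P z (of_nat (Suc t) * u n)}" by blast
  next
    fix z assume "z \<in> {z \<in> P. \<exists>n. le_G P z (of_nat (Suc t) * u n)}"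
    then obtain n where z: "z \<in> P" "le_G P z (u n + of_nat t * u n)"
      by (auto simp: algebra_simps)
    have "u n \<in> X" using X_def mem le_G_refl by blast
    moreover have "of_nat t * u n \<in> imul P t X"
      using Suc.IH X_def of_nat_mult_mem[OF mem] le_G_refl by blast
    ultimately show "z \<in> imul P (Suc t) X" using step z unfolding isum_def by blast
  qed
  then show ?case using X_def by simp
qed

end

end

lemma positive_cone_gen_monoid: "positive_cone (gen_monoid G)"
  by unfold_locales (auto intro: gen_monoid.intros)

lemma gen_monoid_below_doubling_seq:
  fixes u :: "nat \<Rightarrow> rat"
  assumes mem: "\<And>n. u n \<in> gen_monoid G"
    and doubling: "\<And>n. le_G (gen_monoid G) (2 * u n) (u (Suc n))"
    and generators: "\<And>x. x \<in> G \<Longrightarrow> \<exists>k n. le_G (gen_monoid G) x (of_nat k * u n)"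
  shows "gen_monoid G \<subseteq> {x. \<exists>n. le_G (gen_monoid G) x (u n)}" (is "_ \<subseteq> ?U")
proof (rule gen_monoid_least)
  interpret positive_cone "gen_monoid G" by (rule positive_cone_gen_monoid)
  have inc: "le_G (gen_monoid G) (u n) (u (Suc n))" for n
    using le_G_trans[OF _ doubling] mem by (simp add: le_G_def)
  have add: "x + y \<in> ?U" if "x \<in> ?U" "y \<in> ?U" for x y
  proof -
    from that obtain m n where "le_G (gen_monoid G) x (u m)" "le_G (gen_monoid G) y (u n)" by blast
    then have "le_G (gen_monoid G) (x + y) (u (max m n) + u (max m n))"
      by (intro le_G_add_mono) (meson le_G_trans le_G_incseq[of u, OF mem inc] max.cobounded1 max.cobounded2)+
    then have "le_G (gen_monoid G) (x + y) (u (Suc (max m n)))"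
      using le_G_trans doubling by (metis mult_2)
    then show ?thesis by blast
  qed
  have multiple: "of_nat k * u n \<in> ?U" for k n
  proof (induction k)
    case 0
    then show ?case using mem by (auto simp: le_G_def)
  next
    case (Suc k)
    then show ?case using add[of "u n" "of_nat k * u n"] le_G_refl by (auto simp: algebra_simps)
  qed
  show "0 \<in> ?U" using multiple[of 0] by simp
  show "x + y \<in> ?U" if "x \<in> ?U" "y \<in> ?U" for x y using add that .
  show "G \<subseteq> ?U"
    using generators multiple le_G_trans by blast
qed

locale power_fraction_monoid =
  fixes A :: "nat set" and r s :: nat
  assumes zero_in_A: "0 \<in> A" and add_in_A: "\<And>x y. x \<in> A \<Longrightarrow> y \<in> A \<Longrightarrow> x + y \<in> A"
    and s_in_A: "s \<in> A" and r_gt_1: "1 < r" and r_less: "r < s - r" and coprime_r_s: "coprime r s"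
begin

abbreviation B :: "nat set" where "B \<equiv> gen_monoid {r, s - r}"

definition e :: "nat \<Rightarrow> rat" where "e n = (of_nat s / of_nat r) ^ n"

lemma e_Suc: "e (Suc n) = of_nat s / of_nat r * e n"
  by (simp add: e_def)

definition generators :: "rat set" where
  "generators = {of_nat k / of_nat r | k. k \<in> A} \<union> {of_nat k' / of_nat r * e n | k' n. k' \<in> B \<and> n \<ge> 1}"

abbreviation M :: "rat set" where "M \<equiv> gen_monoid generators"

lemma r_pos: "0 < r" and r_le_s: "r \<le> s" and s_pos: "0 < s"
  using r_gt_1 r_less by auto

lemma mult_in_A: "x \<in> A \<Longrightarrow> c * x \<in> A"
  by (induction c) (auto intro: zero_in_A add_in_A)

lemma mult_in_B: "x \<in> B \<Longrightarrow> c * x \<in> B"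
  using gen_monoid_of_nat_mult[of x _ c] by simp

lemma s_in_B: "s \<in> B"
  using gen_monoid.add[OF gen_monoid.gen gen_monoid.gen, of r "{r, s - r}" "s - r"] r_le_s by simp

text \<open>
  The numerators of level K are the numbers T = r^K a + \<Sum>_(k=1..K) b_k s^k r^(K-k) with
  a \<in> A and b_k \<in> B, so that T / r^(K+1) = a/r + \<Sum>_k (b_k/r) e_k.
\<close>
primrec level :: "nat \<Rightarrow> nat set" where
  "level 0 = A"
| "level (Suc K) = {r * T + b * s ^ Suc K | T b. T \<in> level K \<and> b \<in> B}"

lemma zero_in_level: "0 \<in> level K"
  by (induction K) (force intro: zero_in_A gen_monoid.zero)+

lemma level_add: "T \<in> level K \<Longrightarrow> T' \<in> level K \<Longrightarrow> T + T' \<in> level K"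
proof (induction K arbitrary: T T')
  case 0
  then show ?case using add_in_A by simp
next
  case (Suc K)
  then obtain U b U' b' where
    "T = r * U + b * s ^ Suc K" "U \<in> level K" "b \<in> B"
    "T' = r * U' + b' * s ^ Suc K" "U' \<in> level K" "b' \<in> B" by auto
  moreover from calculation have "T + T' = r * (U + U') + (b + b') * s ^ Suc K"
    by (simp add: algebra_simps)
  ultimately show ?case using Suc.IH gen_monoid.add by fastforce
qed

lemma level_mult_r: "T \<in> level K \<Longrightarrow> r * T \<in> level (Suc K)"
  by (force intro: gen_monoid.zero)

lemma level_mult_r_power: "T \<in> level K \<Longrightarrow> r ^ j * T \<in> level (K + j)"
  by (induction j) (simp_all add: level_mult_r mult.assoc del: level.simps)

lemma level_div_r:
  assumes "T \<in> level (Suc K)" "r dvd T"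
  shows "T div r \<in> level K"
proof -
  obtain U b where T: "T = r * U + b * s ^ Suc K" "U \<in> level K" "b \<in> B"
    using assms(1) by auto
  have "r dvd b * s ^ Suc K" using assms(2) T(1) by (simp add: dvd_add_right_iff)
  then have "r dvd b" using coprime_r_s by (simp add: coprime_dvd_mult_left_iff)
  then obtain c where c: "b = r * c" by blast
  txt \<open>The surplus c s^(K+1) is absorbed by the next lower digit, since s \<in> A and s \<in> B.\<close>
  have T_div: "T div r = U + c * s * s ^ K" using T(1) c r_pos by (simp add: algebra_simps)
  show ?thesis
  proof (cases K)
    case 0
    then show ?thesis using T_div T(2) add_in_A mult_in_A[OF s_in_A] by simp
  next
    case (Suc K')
    then obtain V b' where U: "U = r * V + b' * s ^ K" "V \<in> level K'" "b' \<in> B"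
      using T(2) by auto
    have "T div r = r * V + (b' + c * s) * s ^ K" using T_div U(1) by (simp add: algebra_simps)
    moreover have "b' + c * s \<in> B" using U(3) gen_monoid.add mult_in_B[OF s_in_B] by blast
    ultimately show ?thesis using Suc U(2) by auto
  qed
qed

lemma level_cancel_r_power: "r ^ d * T \<in> level (K + d) \<Longrightarrow> T \<in> level K"
proof (induction d)
  case 0
  then show ?case by simp
next
  case (Suc d)
  then have "r ^ Suc d * T div r \<in> level (K + d)" by (intro level_div_r) simp_all
  then show ?case using Suc.IH r_pos by simp
qed

lemma level_bound: "X \<in> level m \<Longrightarrow> X + a * r ^ m = s ^ Suc m \<Longrightarrow> 0 < a \<Longrightarrow> a \<le> s"
proof (induction m arbitrary: X)
  case 0
  then show ?case by simp
next
  case (Suc m)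
  obtain U b where X: "X = r * U + b * s ^ Suc m" "U \<in> level m" "b \<in> B"
    using Suc.prems(1) by auto
  have eq: "r * (U + a * r ^ m) + b * s ^ Suc m = s * s ^ Suc m"
    using Suc.prems(2) X(1) by (simp add: algebra_simps)
  then have "b \<le> s" using s_pos by (metis le_add2 mult_le_cancel2 zero_less_power)
  with eq have eq': "r * (U + a * r ^ m) = (s - b) * s ^ Suc m"
    by (simp add: diff_mult_distrib)
  then have r_dvd: "r dvd s - b"
    using coprime_r_s by (metis coprime_dvd_mult_left_iff coprime_power_right_iff dvd_triv_left)
  txt \<open>The top digit b is s modulo r, and the elements of B below s - r are multiples of r.\<close>
  have "b = s - r"
  proof (rule ccontr)
    assume b_ne: "b \<noteq> s - r"
    have "b \<noteq> s" using eq' Suc.prems(3) r_pos by auto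
    with r_dvd \<open>b \<le> s\<close> have "r \<le> s - b" by (simp add: dvd_imp_le)
    with b_ne have "r dvd b" using X(3) \<open>b \<le> s\<close> by (intro dvd_if_gen_monoid_pair_less) auto
    with r_dvd have "r dvd s" using \<open>b \<le> s\<close> by (metis dvd_add le_add_diff_inverse)
    then show False using coprime_common_divisor_nat[OF coprime_r_s dvd_refl] r_gt_1 by simp
  qed
  with eq' r_le_s r_pos have "U + a * r ^ m = s ^ Suc m" by simp
  then show ?case using Suc.IH X(2) Suc.prems(3) by blast
qed

lemma level_fraction_lift:
  "(of_nat (r ^ j * T) :: rat) / of_nat r ^ Suc (K + j) = of_nat T / of_nat r ^ Suc K"
  using r_pos by (simp add: power_add)

lemma M_level_fractions: "M \<subseteq> {of_nat T / of_nat r ^ Suc K | T K. T \<in> level K}" (is "_ \<subseteq> ?F")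
proof (rule gen_monoid_least)
  have A_gen: "of_nat k / of_nat r \<in> ?F" if "k \<in> A" for k
  proof -
    have "k \<in> level 0 \<and> of_nat k / of_nat r = (of_nat k / of_nat r ^ Suc 0 :: rat)"
      using that by simp
    then show ?thesis by blast
  qed
  have B_gen: "of_nat k' / of_nat r * e n \<in> ?F" if k': "k' \<in> B" and n: "1 \<le> n" for k' n
  proof -
    obtain m where m: "n = Suc m" using n by (cases n) auto
    have "k' * s ^ n = r * 0 + k' * s ^ Suc m \<and> 0 \<in> level m \<and> k' \<in> B"
      using m k' zero_in_level by simp
    then have "k' * s ^ n \<in> level n" unfolding m level.simps by blast
    moreover have "of_nat k' / of_nat r * e n = of_nat (k' * s ^ n) / of_nat r ^ Suc n"
      by (simp add: e_def power_divide)
    ultimately show ?thesis by blast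
  qed
  show "generators \<subseteq> ?F" unfolding generators_def using A_gen B_gen by blast
  show "0 \<in> ?F" using A_gen[OF zero_in_A] by simp
  show "x + y \<in> ?F" if x_in: "x \<in> ?F" and y_in: "y \<in> ?F" for x y
  proof -
    obtain T K where x: "x = of_nat T / of_nat r ^ Suc K" "T \<in> level K"
      using x_in by blast
    obtain T' K' where y: "y = of_nat T' / of_nat r ^ Suc K'" "T' \<in> level K'"
      using y_in by blast
    define N where "N = max K K'"
    have "r ^ (N - K) * T \<in> level N" "r ^ (N - K') * T' \<in> level N"
      using level_mult_r_power[OF x(2), of "N - K"] level_mult_r_power[OF y(2), of "N - K'"]
      by (simp_all add: N_def del: level.simps)
    then have "r ^ (N - K) * T + r ^ (N - K') * T' \<in> level N" by (rule level_add)
    moreover have "x + y = of_nat (r ^ (N - K) * T + r ^ (N - K') * T') / of_nat r ^ Suc N"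
      using level_fraction_lift[of "N - K" T K] level_fraction_lift[of "N - K'" T' K'] x(1) y(1)
      by (simp add: N_def add_divide_distrib del: of_nat_mult of_nat_power)
    ultimately show ?thesis by blast
  qed
qed

lemma power_minus_in_M_bound:
  assumes "e n - of_nat a / of_nat r \<in> M" "1 \<le> n" "0 < a"
  shows "a \<le> s"
proof -
  obtain m where n: "n = Suc m" using assms(2) by (cases n) auto
  obtain K T where T: "T \<in> level K" "e n - of_nat a / of_nat r = of_nat T / of_nat r ^ Suc K"
    using M_level_fractions assms(1) by blast
  have "(of_nat (r ^ n * T + r ^ Suc K * (a * r ^ m)) :: rat) = of_nat (r ^ Suc K * s ^ n)"
    using T(2) r_pos n by (simp add: e_def field_simps power_divide)
  then have eq: "r ^ n * T + r ^ Suc K * (a * r ^ m) = r ^ Suc K * s ^ n"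
    by (simp only: of_nat_eq_iff)
  then have le: "a * r ^ m \<le> s ^ n"
    by (metis le_add2 mult_le_cancel1 r_pos zero_less_power)
  define X where "X = s ^ n - a * r ^ m"
  have "r ^ n * T \<in> level (K + n)" using T(1) by (rule level_mult_r_power)
  moreover have "r ^ n * T = r ^ Suc K * X" using eq by (simp add: X_def diff_mult_distrib2)
  moreover have "K + n = m + Suc K" using n by simp
  ultimately have "r ^ Suc K * X \<in> level (m + Suc K)" by simp
  then have "X \<in> level m" by (rule level_cancel_r_power)
  moreover have "X + a * r ^ m = s ^ Suc m" using le n X_def by simp
  ultimately show ?thesis using level_bound assms(3) by blast
qed

sublocale cone: positive_cone M
  by (rule positive_cone_gen_monoid)

lemma B_generator_in_M: "k \<in> B \<Longrightarrow> 1 \<le> n \<Longrightarrow> of_nat k / of_nat r * e n \<in> M"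
  unfolding generators_def by (intro gen_monoid.gen) blast

lemma A_generator_in_M: "k \<in> A \<Longrightarrow> of_nat k / of_nat r \<in> M"
  unfolding generators_def by (intro gen_monoid.gen) blast

lemma e_in_M: "1 \<le> n \<Longrightarrow> e n \<in> M"
  using B_generator_in_M[OF gen_monoid.gen, of r] r_pos by simp

lemma e_le_G_Suc: "1 \<le> n \<Longrightarrow> le_G M (e n) (e (Suc n))"
  using B_generator_in_M[OF gen_monoid.gen, of "s - r"] r_pos r_le_s
  by (simp add: le_G_def e_Suc of_nat_diff field_simps)

lemma r_e_doubling: "1 \<le> n \<Longrightarrow> le_G M (2 * (of_nat r * e n)) (of_nat r * e (Suc n))"
  using cone.of_nat_mult_mem[OF e_in_M, of n "s - 2 * r"] r_pos r_less
  by (simp add: le_G_def e_Suc of_nat_diff field_simps)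

lemma M_below_r_e: "M \<subseteq> {x. \<exists>n. le_G M x (of_nat r * e (Suc n))}"
proof (rule gen_monoid_below_doubling_seq)
  show "of_nat r * e (Suc n) \<in> M" for n
    by (intro cone.of_nat_mult_mem e_in_M) simp
  show "le_G M (2 * (of_nat r * e (Suc n))) (of_nat r * e (Suc (Suc n)))" for n
    by (rule r_e_doubling) simp
  show "\<exists>k n. le_G M x (of_nat k * (of_nat r * e (Suc n)))" if "x \<in> generators" for x
  proof -
    from that consider (A) k where "k \<in> A" "x = of_nat k / of_nat r"
      | (B) k m where "k \<in> B" "x = of_nat k / of_nat r * e (Suc m)"
      unfolding generators_def by (auto simp: Suc_le_eq dest!: gr0_implies_Suc)
    then show ?thesis
    proof cases
      case (A k)
      have "of_nat k * (of_nat r * e (Suc 0)) - x = of_nat ((r * s - 1) * k) / of_nat r"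
        using A(2) r_pos s_pos by (simp add: e_def of_nat_diff field_simps)
      then have "le_G M x (of_nat k * (of_nat r * e (Suc 0)))"
        using A_generator_in_M[OF mult_in_A[OF A(1)]] by (simp only: le_G_def)
      then show ?thesis by blast
    next
      case (B k m)
      have "of_nat k * (of_nat r * e (Suc m)) - x = of_nat ((r * r - 1) * k) / of_nat r * e (Suc m)"
        using B(2) r_pos by (simp add: of_nat_diff field_simps)
      then have "le_G M x (of_nat k * (of_nat r * e (Suc m)))"
        using B_generator_in_M[OF mult_in_B[OF B(1)], of "Suc m"] by (simp add: le_G_def)
      then show ?thesis by blast
    qed
  qed
qed

theorem powers_interval:
  assumes "D = {x \<in> M. \<exists>n\<ge>1. le_G M x (e n)}"
  shows "is_interval M D \<and> D \<noteq> M \<and> imul M r D = M"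
proof (intro conjI)
  have D: "D = {x \<in> M. \<exists>n. le_G M x (e (Suc n))}"
    using assms by (auto dest: Suc_le_D)
  have mem: "\<And>n. e (Suc n) \<in> M" and inc: "\<And>n. le_G M (e (Suc n)) (e (Suc (Suc n)))"
    by (simp_all add: e_in_M e_le_G_Suc)
  show "is_interval M D"
    unfolding D by (rule cone.is_interval_below_incseq[of "\<lambda>n. e (Suc n)", OF mem inc])
  have "imul M r D = {z \<in> M. \<exists>n. le_G M z (of_nat r * e (Suc n))}"
    unfolding D by (rule cone.imul_below_incseq[of "\<lambda>n. e (Suc n)", OF mem inc]) (use r_gt_1 in simp)
  then show "imul M r D = M" using M_below_r_e by auto
  have "of_nat (2 * s) / of_nat r \<notin> D"
  proof
    assume "of_nat (2 * s) / of_nat r \<in> D"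
    then obtain n where "1 \<le> n" "e n - of_nat (2 * s) / of_nat r \<in> M"
      using assms by (auto simp: le_G_def e_def)
    then have "2 * s \<le> s" using power_minus_in_M_bound s_pos by simp
    then show False using s_pos by simp
  qed
  moreover have "of_nat (2 * s) / of_nat r \<in> M" using A_generator_in_M mult_in_A[OF s_in_A] .
  ultimately show "D \<noteq> M" by blast
qed

end

theorem lemma2p2:
  fixes p q r s :: nat and A B :: "nat set" and M D :: "rat set"
  assumes "0 < p" "0 < q" "1 < q" "q < p - q" "gcd p q = 1"
    and "A = gen_monoid {q, p - q}"
    and "s \<in> A" "s \<noteq> 0"
    and "0 < r" "1 < r" "r < s - r" "gcd r s = 1"
    and "B = gen_monoid {r, s - r}"
    and "M = gen_monoid ({of_nat k / of_nat r | k. k \<in> A}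
            \<union> {of_nat k' / of_nat r * (of_nat s / of_nat r) ^ n | k' n. k' \<in> B \<and> n \<ge> 1})"
    and "D = {x \<in> M. \<exists>n\<ge>1. le_G M x ((of_nat s / of_nat r) ^ n)}"
  shows "is_interval M D \<and> D \<noteq> M \<and> imul M r D = M"
proof -
  interpret power_fraction_monoid A r s
    using assms by unfold_locales (auto intro: gen_monoid.intros simp: coprime_iff_gcd_eq_1)
  show ?thesis
    using powers_interval assms(13-15) by (simp add: generators_def e_def)
qed

end
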